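(* Let $\Omega\subset\mathbb{R}^2$ be a box such that $\overline{\Omega}=\bigcup_i\overline{\Omega_i}$ for at most countably many mutually disjoint boxes $\Omega_i\subset\mathbb{R}^2$, all with endpoints on the grid for the mesh size vector $h=(h_1,h_2)$. Then for every $u:\overline{\Omega}_h\to\mathbb{R}$ and $1\le p<\infty$, $$\|u\|^p_{L^p(\Omega_h)}\le\sum_i\|u\|^p_{L^p(\Omega_{i,h})}\le4\|u\|^p_{L^p(\Omega_h)},\qquad \|u\|^2_{D(\Omega_h)}\le\sum_i\|u\|^2_{D(\Omega_{i,h})}\le2\|u\|^2_{D(\Omega_h)}.$$
   Context: For a box $B=(a_1,b_1)\times(a_2,b_2)$ with $a_j=k_jh_j$, $b_j=l_jh_j$, $k_j,l_j\in\mathbb{Z}\cup\{\pm\infty\}$, $l_j-k_j>1$: $\mathbb{R}^2_h=\{(h_1z_1,h_2z_2):z_j\in\mathbb{Z}\}$, $\overline{B}_h=\overline{B}\cap\mathbb{R}^2_h$, $\partial B_h=\partial B\cap\mathbb{R}^2_h$, $\partial_j^+B_h=\partial B_h\cap\{x_j=b_j\}$, $\mathbf{h}=h_1h_2$, $D_j^+u(x)=(u(x+h_je_j)-u(x))/h_j$. Norms: $\|u\|^p_{L^p(B_h)}=\sum_{x\in\overline{B}_h}|u(x)|^p\mathbf{h}$, $\|u\|^2_{D(B_h)}=\sum_{j=1}^2\sum_{x\in\overline{B}_h\setminus\partial_j^+B_h}|D_j^+u(x)|^2\mathbf{h}$. $\Omega_{i,h}$ denotes the discretization of $\Omega_i$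 in this sense. *)

theory Defs
  imports "HOL-Analysis.Analysis" "HOL-Library.Extended_Real"
begin

text \<open>A box is given by its (extended real) endpoints (a1, b1, a2, b2):
  B = (a1,b1) x (a2,b2).\<close>
type_synonym ebox = "ereal \<times> ereal \<times> ereal \<times> ereal"

definition box_set :: "ebox \<Rightarrow> (real \<times> real) set" where
  "box_set B = (case B of (a1, b1, a2, b2) \<Rightarrow>
     {x. a1 < ereal (fst x) \<and> ereal (fst x) < b1 \<and> a2 < ereal (snd x) \<and> ereal (snd x) < b2})"

definition on_grid_pt :: "real \<Rightarrow> ereal \<Rightarrow> bool" where
  "on_grid_pt h a = (a = \<infinity> \<or> a = -\<infinity> \<or> (\<exists>k::int. a = ereal (of_int k * h)))"

definition grid_box :: "real \<Rightarrow> real \<Rightarrow> ebox \<Rightarrow> bool" where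
  "grid_box h1 h2 B = (case B of (a1, b1, a2, b2) \<Rightarrow>
     on_grid_pt h1 a1 \<and> on_grid_pt h1 b1 \<and> on_grid_pt h2 a2 \<and> on_grid_pt h2 b2 \<and>
     a1 \<noteq> \<infinity> \<and> b1 \<noteq> -\<infinity> \<and> a2 \<noteq> \<infinity> \<and> b2 \<noteq> -\<infinity> \<and>
     b1 - a1 > ereal h1 \<and> b2 - a2 > ereal h2)"

definition grid :: "real \<Rightarrow> real \<Rightarrow> (real \<times> real) set" where
  "grid h1 h2 = {(h1 * of_int z1, h2 * of_int z2) | z1 z2. True}"

definition clos_h :: "real \<Rightarrow> real \<Rightarrow> ebox \<Rightarrow> (real \<times> real) set" where
  "clos_h h1 h2 B = closure (box_set B) \<inter> grid h1 h2"

definition bdry_h :: "real \<Rightarrow> real \<Rightarrow> ebox \<Rightarrow> (real \<times> real) set" where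
  "bdry_h h1 h2 B = frontier (box_set B) \<inter> grid h1 h2"

definition bdry1_plus :: "real \<Rightarrow> real \<Rightarrow> ebox \<Rightarrow> (real \<times> real) set" where
  "bdry1_plus h1 h2 B = bdry_h h1 h2 B \<inter> {x. ereal (fst x) = fst (snd B)}"

definition bdry2_plus :: "real \<Rightarrow> real \<Rightarrow> ebox \<Rightarrow> (real \<times> real) set" where
  "bdry2_plus h1 h2 B = bdry_h h1 h2 B \<inter> {x. ereal (snd x) = snd (snd (snd B))}"

definition D1plus :: "real \<Rightarrow> (real \<times> real \<Rightarrow> real) \<Rightarrow> real \<times> real \<Rightarrow> real" where
  "D1plus h1 u x = (u (fst x + h1, snd x) - u x) / h1"

definition D2plus :: "real \<Rightarrow> (real \<times> real \<Rightarrow> real) \<Rightarrow> real \<times> real \<Rightarrow> real" where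
  "D2plus h2 u x = (u (fst x, snd x + h2) - u x) / h2"

definition Lp_pow :: "real \<Rightarrow> real \<Rightarrow> real \<Rightarrow> ebox \<Rightarrow> (real \<times> real \<Rightarrow> real) \<Rightarrow> ennreal" where
  "Lp_pow h1 h2 p B u = (\<Sum>\<^sub>\<infinity>x\<in>clos_h h1 h2 B. ennreal (\<bar>u x\<bar> powr p * (h1 * h2)))"

definition D_sq :: "real \<Rightarrow> real \<Rightarrow> ebox \<Rightarrow> (real \<times> real \<Rightarrow> real) \<Rightarrow> ennreal" where
  "D_sq h1 h2 B u =
     (\<Sum>\<^sub>\<infinity>x\<in>clos_h h1 h2 B - bdry1_plus h1 h2 B. ennreal ((D1plus h1 u x)\<^sup>2 * (h1 * h2)))
   + (\<Sum>\<^sub>\<infinity>x\<in>clos_h h1 h2 B - bdry2_plus h1 h2 B. ennreal ((D2plus h2 u x)\<^sup>2 * (h1 * h2)))"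

end

theory Submission
  imports Defs
begin

text \<open>Every grid point of the closed box \<open>\<Omega>\<close> lies in some closed \<open>\<Omega>\<^sub>i\<close>, and a point lies in at most
  four closed boxes of a family of disjoint open boxes: the boxes containing it are told apart by
  the quadrant around the point they occupy. A forward difference
  \<open>D\<^sub>j\<^sup>+u(x)\<close> enters the \<open>D\<close> norm of a grid box exactly when \<open>x + h\<^sub>je\<^sub>j/2\<close> lies in the closed box; this
  point is off the grid in direction \<open>j\<close>, hence interior in that direction to every box containing
  it, so it lies in at most two of the \<open>\<Omega>\<^sub>i\<close>, which gives the factor 2 for the \<open>D\<close> norm.\<close>

lemma infsum_sum_ennreal:
  fixes g :: "'j \<Rightarrow> 'a \<Rightarrow> ennreal"
  assumes "finite J"
  shows "(\<Sum>\<^sub>\<infinity>x\<in>S. \<Sum>j\<in>J. g j x) = (\<Sum>j\<in>J. \<Sum>\<^sub>\<infinity>x\<in>S. g j x)"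
  using assms
  by (induction J rule: finite_induct) (simp_all add: infsum_add nonneg_summable_on_complete)

lemma sum_le_infsum_ennreal:
  fixes f :: "'a \<Rightarrow> ennreal"
  assumes "finite F" and "F \<subseteq> A"
  shows "sum f F \<le> infsum f A"
proof -
  have "infsum f F \<le> infsum f A"
    using assms by (intro infsum_mono_neutral) (auto simp: nonneg_summable_on_complete)
  then show ?thesis
    using assms(1) by simp
qed

lemma infsum_ennreal_le_sum_of_cover:
  fixes f :: "'a \<Rightarrow> ennreal"
  assumes "S \<subseteq> (\<Union>i\<in>I. T i)"
  shows "infsum f S \<le> (\<Sum>\<^sub>\<infinity>i\<in>I. infsum f (T i))"
proof (rule infsum_le_finite_sums)
  fix F assume F: "finite F" "F \<subseteq> S"
  obtain sel where sel: "\<And>x. x \<in> S \<Longrightarrow> sel x \<in> I \<and> x \<in> T (sel x)"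
    using assms by (metis UN_iff subsetD)
  have "sum f F = (\<Sum>j\<in>sel ` F. sum f {x\<in>F. sel x = j})"
    using F(1) by (rule sum.image_gen)
  also have "\<dots> \<le> (\<Sum>j\<in>sel ` F. infsum f (T j))"
    using F sel by (intro sum_mono sum_le_infsum_ennreal) (simp, blast)
  also have "\<dots> \<le> (\<Sum>\<^sub>\<infinity>i\<in>I. infsum f (T i))"
    using F sel by (intro sum_le_infsum_ennreal) auto
  finally show "sum f F \<le> (\<Sum>\<^sub>\<infinity>i\<in>I. infsum f (T i))" .
qed (simp add: nonneg_summable_on_complete)

lemma sum_infsum_ennreal_le_card_mult:
  fixes f :: "'a \<Rightarrow> ennreal" and label :: "'a \<Rightarrow> 'i \<Rightarrow> 'b::finite"
  assumes sub: "\<And>i. i \<in> I \<Longrightarrow> T i \<subseteq> S"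
    and inj: "\<And>x. x \<in> S \<Longrightarrow> inj_on (label x) {i\<in>I. x \<in> T i}"
  shows "(\<Sum>\<^sub>\<infinity>i\<in>I. infsum f (T i)) \<le> of_nat CARD('b) * infsum f S"
proof (rule infsum_le_finite_sums)
  fix J assume J: "finite J" "J \<subseteq> I"
  have "(\<Sum>j\<in>J. infsum f (T j)) = (\<Sum>j\<in>J. \<Sum>\<^sub>\<infinity>x\<in>S. if x \<in> T j then f x else 0)"
    using J sub by (intro sum.cong infsum_cong_neutral) auto
  also have "\<dots> = (\<Sum>\<^sub>\<infinity>x\<in>S. \<Sum>j\<in>J. if x \<in> T j then f x else 0)"
    using J(1) by (rule infsum_sum_ennreal[symmetric])
  also have "\<dots> \<le> (\<Sum>\<^sub>\<infinity>x\<in>S. \<Sum>k<CARD('b). f x)"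
  proof (rule infsum_mono)
    fix x assume x: "x \<in> S"
    have "card {j\<in>J. x \<in> T j} \<le> card {i\<in>I. x \<in> T i}"
      using J inj[OF x] by (intro card_mono) (auto dest: inj_on_finite)
    also have "\<dots> = card (label x ` {i\<in>I. x \<in> T i})"
      using inj[OF x] by (rule card_image[symmetric])
    also have "\<dots> \<le> CARD('b)"
      by (rule card_mono) auto
    finally have "of_nat (card {j\<in>J. x \<in> T j}) * f x \<le> of_nat CARD('b) * f x"
      by (intro mult_right_mono) simp_all
    then show "(\<Sum>j\<in>J. if x \<in> T j then f x else 0) \<le> (\<Sum>k<CARD('b). f x)"
      by (simp only: sum.inter_filter[OF J(1), symmetric] sum_constant card_lessThan)
  qed (simp_all add: nonneg_summable_on_complete)
  also have "\<dots> = of_nat CARD('b) * infsum f S"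
    using infsum_sum_ennreal[of "{..<CARD('b)}" "\<lambda>_. f" S] by simp
  finally show "(\<Sum>j\<in>J. infsum f (T j)) \<le> of_nat CARD('b) * infsum f S" .
qed (simp add: nonneg_summable_on_complete)

definition closed_box_set :: "ebox \<Rightarrow> (real \<times> real) set" where
  "closed_box_set B = (case B of (a1, b1, a2, b2) \<Rightarrow>
     {x. a1 \<le> ereal (fst x) \<and> ereal (fst x) \<le> b1 \<and> a2 \<le> ereal (snd x) \<and> ereal (snd x) \<le> b2})"

lemma mem_box_set:
  "x \<in> box_set B \<longleftrightarrow> fst B < ereal (fst x) \<and> ereal (fst x) < fst (snd B)
     \<and> fst (snd (snd B)) < ereal (snd x) \<and> ereal (snd x) < snd (snd (snd B))"
  by (cases B) (simp add: box_set_def)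

lemma mem_closed_box_set:
  "x \<in> closed_box_set B \<longleftrightarrow> fst B \<le> ereal (fst x) \<and> ereal (fst x) \<le> fst (snd B)
     \<and> fst (snd (snd B)) \<le> ereal (snd x) \<and> ereal (snd x) \<le> snd (snd (snd B))"
  by (cases B) (simp add: closed_box_set_def)

lemma box_set_nonempty_iff:
  "box_set B \<noteq> {} \<longleftrightarrow> fst B < fst (snd B) \<and> fst (snd (snd B)) < snd (snd (snd B))"
proof
  assume "box_set B \<noteq> {}"
  then show "fst B < fst (snd B) \<and> fst (snd (snd B)) < snd (snd (snd B))"
    by (auto simp: mem_box_set dest: order.strict_trans)
next
  assume "fst B < fst (snd B) \<and> fst (snd (snd B)) < snd (snd (snd B))"
  then obtain t1 t2 where "fst B < ereal t1" "ereal t1 < fst (snd B)"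
    and "fst (snd (snd B)) < ereal t2" "ereal t2 < snd (snd (snd B))"
    using ereal_dense2 by meson
  then have "(t1, t2) \<in> box_set B"
    by (simp add: mem_box_set)
  then show "box_set B \<noteq> {}" by blast
qed

lemma ereal_less_if_diff_greater:
  fixes a b :: ereal
  assumes "a \<noteq> \<infinity>" and "b \<noteq> -\<infinity>" and "ereal h < b - a" and "0 \<le> h"
  shows "a < b"
  using assms by (cases a; cases b) auto

lemma grid_box_nonempty:
  assumes "h1 > 0" and "h2 > 0" and "grid_box h1 h2 B"
  shows "box_set B \<noteq> {}"
proof -
  obtain a1 b1 a2 b2 where B: "B = (a1, b1, a2, b2)"
    by (cases B)
  show ?thesis
    using assms ereal_less_if_diff_greater[of a1 b1 h1] ereal_less_if_diff_greater[of a2 b2 h2]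
    by (auto simp: B grid_box_def box_set_nonempty_iff)
qed

lemma closure_ereal_interval:
  fixes a b :: ereal
  assumes "a < b"
  shows "closure {t::real. a < ereal t \<and> ereal t < b} = {t. a \<le> ereal t \<and> ereal t \<le> b}"
  using assms
proof (cases a; cases b)
  fix r s assume ab: "a = ereal r" "b = ereal s"
  then have "{t::real. a < ereal t \<and> ereal t < b} = {r<..<s}"
    and "{t. a \<le> ereal t \<and> ereal t \<le> b} = {r..s}"
    by auto
  then show ?thesis
    using assms ab by simp
qed (simp_all flip: greaterThan_def lessThan_def atLeast_def atMost_def)

lemma closure_box_set:
  assumes "box_set B \<noteq> {}"
  shows "closure (box_set B) = closed_box_set B"
proof -
  obtain a1 b1 a2 b2 where B: "B = (a1, b1, a2, b2)"
    by (cases B)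
  have "a1 < b1" "a2 < b2"
    using assms by (simp_all add: box_set_nonempty_iff B)
  moreover have "box_set B = {t. a1 < ereal t \<and> ereal t < b1} \<times> {t. a2 < ereal t \<and> ereal t < b2}"
    by (auto simp: B box_set_def)
  ultimately show ?thesis
    by (auto simp: closure_Times closure_ereal_interval B closed_box_set_def)
qed

lemma clos_h_diff_bdry1_plus_eq:
  assumes "box_set B \<noteq> {}"
  shows "clos_h h1 h2 B - bdry1_plus h1 h2 B
    = {x \<in> closed_box_set B \<inter> grid h1 h2. ereal (fst x) < fst (snd B)}"
proof -
  have "x \<in> frontier (box_set B)" if "x \<in> closed_box_set B" "ereal (fst x) = fst (snd B)" for x
    using that interior_subset[of "box_set B"]
    by (auto simp: frontier_def closure_box_set[OF assms] mem_box_set)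
  then show ?thesis
    by (auto simp: clos_h_def bdry1_plus_def bdry_h_def closure_box_set[OF assms]
        mem_closed_box_set order.order_iff_strict)
qed

lemma clos_h_diff_bdry2_plus_eq:
  assumes "box_set B \<noteq> {}"
  shows "clos_h h1 h2 B - bdry2_plus h1 h2 B
    = {x \<in> closed_box_set B \<inter> grid h1 h2. ereal (snd x) < snd (snd (snd B))}"
proof -
  have "x \<in> frontier (box_set B)" if "x \<in> closed_box_set B" "ereal (snd x) = snd (snd (snd B))" for x
    using that interior_subset[of "box_set B"]
    by (auto simp: frontier_def closure_box_set[OF assms] mem_box_set)
  then show ?thesis
    by (auto simp: clos_h_def bdry2_plus_def bdry_h_def closure_box_set[OF assms]
        mem_closed_box_set order.order_iff_strict)
qed

lemma on_grid_pt_half_step_iff: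
  fixes z :: int
  assumes "h > 0" and "on_grid_pt h a" and "on_grid_pt h b"
  shows "a \<le> ereal (h * z + h / 2) \<and> ereal (h * z + h / 2) \<le> b
    \<longleftrightarrow> a \<le> ereal (h * z) \<and> ereal (h * z) < b"
proof -
  have scale: "h * x \<le> h * y \<longleftrightarrow> x \<le> y" for x y :: real
    using assms(1) by simp
  have lower_step: "of_int k * h \<le> h * z + h / 2 \<longleftrightarrow> of_int k * h \<le> h * z" for k :: int
    using scale[of k "z + 1 / 2"] scale[of k z] by (simp add: algebra_simps) linarith
  have upper_step: "h * z + h / 2 \<le> of_int k * h \<longleftrightarrow> h * z < of_int k * h" for k :: int
    using scale[of "z + 1 / 2" k] scale[of k z] by (simp add: algebra_simps) linarith
  have "a \<le> ereal (h * z + h / 2) \<longleftrightarrow> a \<le> ereal (h * z)"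
    using assms(2) unfolding on_grid_pt_def
    by (elim disjE exE) (simp_all add: lower_step)
  moreover have "ereal (h * z + h / 2) \<le> b \<longleftrightarrow> ereal (h * z) < b"
    using assms(3) unfolding on_grid_pt_def
    by (elim disjE exE) (simp_all add: upper_step)
  ultimately show ?thesis
    by blast
qed

lemma on_grid_pt_neq_half_step:
  fixes z :: int
  assumes "h > 0" and "on_grid_pt h b"
  shows "b \<noteq> ereal (h * z + h / 2)"
proof
  assume b: "b = ereal (h * z + h / 2)"
  with assms(2) obtain k :: int where "b = ereal (of_int k * h)"
    by (auto simp: on_grid_pt_def)
  with b have "h * of_int k = h * (real_of_int z + 1 / 2)"
    by (simp add: algebra_simps)
  then have "real_of_int (2 * k) = real_of_int (2 * z + 1)"
    using assms(1) by simp
  then have "2 * k = 2 * z + 1"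
    by (simp only: of_int_eq_iff)
  then show False
    by presburger
qed

text \<open>With \<open>v = 0\<close> this is the closed grid box; with a half step \<open>v = h\<^sub>je\<^sub>j/2\<close> it is the set of grid
  points at which \<open>D\<^sub>j\<^sup>+\<close> enters the \<open>D\<close> norm.\<close>
definition grid_shifted_in :: "real \<Rightarrow> real \<Rightarrow> real \<times> real \<Rightarrow> ebox \<Rightarrow> (real \<times> real) set" where
  "grid_shifted_in h1 h2 v B = {x \<in> grid h1 h2. x + v \<in> closed_box_set B}"

lemma clos_h_eq_grid_shifted_in:
  assumes "h1 > 0" and "h2 > 0" and "grid_box h1 h2 B"
  shows "clos_h h1 h2 B = grid_shifted_in h1 h2 (0, 0) B"
  using closure_box_set[OF grid_box_nonempty[OF assms]]
  by (auto simp: clos_h_def grid_shifted_in_def zero_prod_def[symmetric])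

lemma clos_h_diff_bdry1_plus:
  assumes "h1 > 0" and "h2 > 0" and "grid_box h1 h2 B"
  shows "clos_h h1 h2 B - bdry1_plus h1 h2 B = grid_shifted_in h1 h2 (h1 / 2, 0) B"
proof -
  obtain a1 b1 a2 b2 where B: "B = (a1, b1, a2, b2)"
    by (cases B)
  have grid_ends: "on_grid_pt h1 a1" "on_grid_pt h1 b1"
    using assms(3) by (simp_all add: B grid_box_def)
  have "x + (h1 / 2, 0) \<in> closed_box_set B
      \<longleftrightarrow> x \<in> closed_box_set B \<and> ereal (fst x) < b1" if x_grid: "x \<in> grid h1 h2" for x
  proof -
    obtain z1 z2 where x: "x = (h1 * of_int z1, h2 * of_int z2)"
      using x_grid by (auto simp: grid_def)
    show ?thesis
      using on_grid_pt_half_step_iff[OF assms(1) grid_ends, of z1]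
      by (auto simp: x B mem_closed_box_set)
  qed
  then show ?thesis
    using clos_h_diff_bdry1_plus_eq[OF grid_box_nonempty[OF assms]]
    by (auto simp: grid_shifted_in_def B)
qed

lemma clos_h_diff_bdry2_plus:
  assumes "h1 > 0" and "h2 > 0" and "grid_box h1 h2 B"
  shows "clos_h h1 h2 B - bdry2_plus h1 h2 B = grid_shifted_in h1 h2 (0, h2 / 2) B"
proof -
  obtain a1 b1 a2 b2 where B: "B = (a1, b1, a2, b2)"
    by (cases B)
  have grid_ends: "on_grid_pt h2 a2" "on_grid_pt h2 b2"
    using assms(3) by (simp_all add: B grid_box_def)
  have "x + (0, h2 / 2) \<in> closed_box_set B
      \<longleftrightarrow> x \<in> closed_box_set B \<and> ereal (snd x) < b2" if x_grid: "x \<in> grid h1 h2" for x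
  proof -
    obtain z1 z2 where x: "x = (h1 * of_int z1, h2 * of_int z2)"
      using x_grid by (auto simp: grid_def)
    show ?thesis
      using on_grid_pt_half_step_iff[OF assms(2) grid_ends, of z2]
      by (auto simp: x B mem_closed_box_set)
  qed
  then show ?thesis
    using clos_h_diff_bdry2_plus_eq[OF grid_box_nonempty[OF assms]]
    by (auto simp: grid_shifted_in_def B)
qed

lemma ereal_intervals_meet:
  fixes a b a' b' :: ereal
  assumes "a < b" and "a \<le> ereal x" and "ereal x \<le> b"
    and "a' < b'" and "a' \<le> ereal x" and "ereal x \<le> b'"
    and "ereal x < b \<longleftrightarrow> ereal x < b'"
  shows "\<exists>t. a < ereal t \<and> ereal t < b \<and> a' < ereal t \<and> ereal t < b'"
proof (cases "ereal x < b")
  case True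
  then obtain t where "ereal x < ereal t" "ereal t < min b b'"
    using assms(7) ereal_dense2 by (metis min_less_iff_conj)
  then show ?thesis
    using assms(2,5) by (metis le_less_trans min_less_iff_conj)
next
  case False
  then have "max a a' < ereal x"
    using assms by auto
  then obtain t where "max a a' < ereal t" "ereal t < ereal x"
    using ereal_dense2 by blast
  then show ?thesis
    using False assms by (metis less_le_trans max_less_iff_conj)
qed

lemma inj_on_upper_sides:
  assumes disj: "disjoint_family_on (\<lambda>i. box_set (B i)) I"
    and nonempty: "\<And>i. i \<in> I \<Longrightarrow> box_set (B i) \<noteq> {}"
  shows "inj_on (\<lambda>i. (ereal (fst y) < fst (snd (B i)), ereal (snd y) < snd (snd (snd (B i)))))
    {i \<in> I. y \<in> closed_box_set (B i)}"
proof (rule inj_onI)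
  fix i j
  assume i: "i \<in> {i \<in> I. y \<in> closed_box_set (B i)}" and j: "j \<in> {i \<in> I. y \<in> closed_box_set (B i)}"
    and sides: "(ereal (fst y) < fst (snd (B i)), ereal (snd y) < snd (snd (snd (B i))))
      = (ereal (fst y) < fst (snd (B j)), ereal (snd y) < snd (snd (snd (B j))))"
  have lower_lt_upper: "fst (B k) < fst (snd (B k))" "fst (snd (snd (B k))) < snd (snd (snd (B k)))"
    if "k \<in> I" for k
    using nonempty[OF that] by (simp_all add: box_set_nonempty_iff)
  obtain t1 where "fst (B i) < ereal t1 \<and> ereal t1 < fst (snd (B i))
      \<and> fst (B j) < ereal t1 \<and> ereal t1 < fst (snd (B j))"
    using ereal_intervals_meet[OF lower_lt_upper(1) _ _ lower_lt_upper(1), of i "fst y" j] i j sides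
    by (auto simp: mem_closed_box_set)
  moreover obtain t2 where "fst (snd (snd (B i))) < ereal t2 \<and> ereal t2 < snd (snd (snd (B i)))
      \<and> fst (snd (snd (B j))) < ereal t2 \<and> ereal t2 < snd (snd (snd (B j)))"
    using ereal_intervals_meet[OF lower_lt_upper(2) _ _ lower_lt_upper(2), of i "snd y" j] i j sides
    by (auto simp: mem_closed_box_set)
  ultimately have "(t1, t2) \<in> box_set (B i) \<inter> box_set (B j)"
    by (simp add: mem_box_set)
  then show "i = j"
    using disj i j by (auto simp: disjoint_family_on_def)
qed

lemma grid_box_upper_on_grid:
  assumes "grid_box h1 h2 B"
  shows "on_grid_pt h1 (fst (snd B))" and "on_grid_pt h2 (snd (snd (snd B)))"
  using assms by (cases B; simp add: grid_box_def)+

locale grid_box_partition =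
  fixes h1 h2 :: real and \<Omega> :: ebox and I :: "'i set" and B :: "'i \<Rightarrow> ebox"
  assumes mesh_pos: "h1 > 0" "h2 > 0"
    and grid_box_\<Omega>: "grid_box h1 h2 \<Omega>"
    and grid_box_B: "\<And>i. i \<in> I \<Longrightarrow> grid_box h1 h2 (B i)"
    and disjoint: "disjoint_family_on (\<lambda>i. box_set (B i)) I"
    and closure_cover: "closure (box_set \<Omega>) = (\<Union>i\<in>I. closure (box_set (B i)))"
begin

lemma grid_shifted_in_cover:
  "grid_shifted_in h1 h2 v \<Omega> = (\<Union>i\<in>I. grid_shifted_in h1 h2 v (B i))"
proof -
  have "closed_box_set \<Omega> = (\<Union>i\<in>I. closed_box_set (B i))"
    unfolding closure_box_set[OF grid_box_nonempty[OF mesh_pos grid_box_\<Omega>], symmetric] closure_cover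
    by (rule SUP_cong) (simp_all add: closure_box_set grid_box_nonempty[OF mesh_pos grid_box_B])
  then show ?thesis
    by (auto simp: grid_shifted_in_def)
qed

lemma infsum_grid_shifted_in_le_sum:
  fixes f :: "real \<times> real \<Rightarrow> ennreal"
  shows "infsum f (grid_shifted_in h1 h2 v \<Omega>)
    \<le> (\<Sum>\<^sub>\<infinity>i\<in>I. infsum f (grid_shifted_in h1 h2 v (B i)))"
  by (rule infsum_ennreal_le_sum_of_cover) (simp add: grid_shifted_in_cover)

lemma sum_infsum_grid_shifted_in_le_card_mult:
  fixes f :: "real \<times> real \<Rightarrow> ennreal" and label :: "real \<times> real \<Rightarrow> 'i \<Rightarrow> 'b::finite"
  assumes "\<And>x. x \<in> grid_shifted_in h1 h2 v \<Omega>
    \<Longrightarrow> inj_on (label (x + v)) {i \<in> I. x + v \<in> closed_box_set (B i)}"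
  shows "(\<Sum>\<^sub>\<infinity>i\<in>I. infsum f (grid_shifted_in h1 h2 v (B i)))
    \<le> of_nat CARD('b) * infsum f (grid_shifted_in h1 h2 v \<Omega>)"
proof (rule sum_infsum_ennreal_le_card_mult)
  fix x assume x: "x \<in> grid_shifted_in h1 h2 v \<Omega>"
  show "inj_on (label (x + v)) {i \<in> I. x \<in> grid_shifted_in h1 h2 v (B i)}"
    by (rule inj_on_subset[OF assms[OF x]]) (auto simp: grid_shifted_in_def)
qed (use grid_shifted_in_cover in blast)

lemma sum_infsum_grid_shifted_in_le_4:
  fixes f :: "real \<times> real \<Rightarrow> ennreal"
  shows "(\<Sum>\<^sub>\<infinity>i\<in>I. infsum f (grid_shifted_in h1 h2 v (B i)))
    \<le> 4 * infsum f (grid_shifted_in h1 h2 v \<Omega>)"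
proof -
  have "(\<Sum>\<^sub>\<infinity>i\<in>I. infsum f (grid_shifted_in h1 h2 v (B i)))
      \<le> of_nat CARD(bool \<times> bool) * infsum f (grid_shifted_in h1 h2 v \<Omega>)"
    by (rule sum_infsum_grid_shifted_in_le_card_mult[where label =
          "\<lambda>y i. (ereal (fst y) < fst (snd (B i)), ereal (snd y) < snd (snd (snd (B i))))"])
      (rule inj_on_upper_sides[OF disjoint grid_box_nonempty[OF mesh_pos grid_box_B]])
  then show ?thesis
    by simp
qed

lemma sum_infsum_grid_shifted_in_half_step1_le_2:
  fixes f :: "real \<times> real \<Rightarrow> ennreal"
  defines "v \<equiv> (h1 / 2, 0)"
  shows "(\<Sum>\<^sub>\<infinity>i\<in>I. infsum f (grid_shifted_in h1 h2 v (B i)))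
    \<le> 2 * infsum f (grid_shifted_in h1 h2 v \<Omega>)"
proof -
  have "inj_on (\<lambda>i. ereal (snd (x + v)) < snd (snd (snd (B i))))
      {i \<in> I. x + v \<in> closed_box_set (B i)}" if x_in: "x \<in> grid_shifted_in h1 h2 v \<Omega>" for x
  proof -
    obtain z1 z2 where x: "x = (h1 * of_int z1, h2 * of_int z2)"
      using x_in by (auto simp: grid_shifted_in_def grid_def)
    have "ereal (fst (x + v)) < fst (snd (B i))"
      if "i \<in> I" and "x + v \<in> closed_box_set (B i)" for i
      using that on_grid_pt_neq_half_step[OF mesh_pos(1) grid_box_upper_on_grid(1)[OF grid_box_B], of i z1]
      by (auto simp: x v_def mem_closed_box_set order.order_iff_strict)
    then show ?thesis
      using inj_on_upper_sides[OF disjoint grid_box_nonempty[OF mesh_pos grid_box_B], of "x + v"]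
      by (auto simp: inj_on_def)
  qed
  then show ?thesis
    using sum_infsum_grid_shifted_in_le_card_mult[of v
        "\<lambda>y i. ereal (snd y) < snd (snd (snd (B i)))" f]
    by simp
qed

lemma sum_infsum_grid_shifted_in_half_step2_le_2:
  fixes f :: "real \<times> real \<Rightarrow> ennreal"
  defines "v \<equiv> (0, h2 / 2)"
  shows "(\<Sum>\<^sub>\<infinity>i\<in>I. infsum f (grid_shifted_in h1 h2 v (B i)))
    \<le> 2 * infsum f (grid_shifted_in h1 h2 v \<Omega>)"
proof -
  have "inj_on (\<lambda>i. ereal (fst (x + v)) < fst (snd (B i)))
      {i \<in> I. x + v \<in> closed_box_set (B i)}" if x_in: "x \<in> grid_shifted_in h1 h2 v \<Omega>" for x
  proof -
    obtain z1 z2 where x: "x = (h1 * of_int z1, h2 * of_int z2)"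
      using x_in by (auto simp: grid_shifted_in_def grid_def)
    have "ereal (snd (x + v)) < snd (snd (snd (B i)))"
      if "i \<in> I" and "x + v \<in> closed_box_set (B i)" for i
      using that on_grid_pt_neq_half_step[OF mesh_pos(2) grid_box_upper_on_grid(2)[OF grid_box_B], of i z2]
      by (auto simp: x v_def mem_closed_box_set order.order_iff_strict)
    then show ?thesis
      using inj_on_upper_sides[OF disjoint grid_box_nonempty[OF mesh_pos grid_box_B], of "x + v"]
      by (auto simp: inj_on_def)
  qed
  then show ?thesis
    using sum_infsum_grid_shifted_in_le_card_mult[of v
        "\<lambda>y i. ereal (fst y) < fst (snd (B i))" f]
    by simp
qed

end

theorem mainTheorem16:
  fixes h1 h2 p :: real and \<Omega> :: ebox and I :: "'i set" and B :: "'i \<Rightarrow> ebox"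
    and u :: "real \<times> real \<Rightarrow> real"
  assumes "h1 > 0" and "h2 > 0"
    and "grid_box h1 h2 \<Omega>"
    and "countable I"
    and "\<And>i. i \<in> I \<Longrightarrow> grid_box h1 h2 (B i)"
    and "disjoint_family_on (\<lambda>i. box_set (B i)) I"
    and "closure (box_set \<Omega>) = (\<Union>i\<in>I. closure (box_set (B i)))"
    and "1 \<le> p"
  shows "Lp_pow h1 h2 p \<Omega> u \<le> (\<Sum>\<^sub>\<infinity>i\<in>I. Lp_pow h1 h2 p (B i) u)
       \<and> (\<Sum>\<^sub>\<infinity>i\<in>I. Lp_pow h1 h2 p (B i) u) \<le> 4 * Lp_pow h1 h2 p \<Omega> u
       \<and> D_sq h1 h2 \<Omega> u \<le> (\<Sum>\<^sub>\<infinity>i\<in>I. D_sq h1 h2 (B i) u)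
       \<and> (\<Sum>\<^sub>\<infinity>i\<in>I. D_sq h1 h2 (B i) u) \<le> 2 * D_sq h1 h2 \<Omega> u"
proof -
  interpret grid_box_partition h1 h2 \<Omega> I B
    using assms by unfold_locales
  let ?G = "grid_shifted_in h1 h2"
  define g where "g = (\<lambda>x. ennreal (\<bar>u x\<bar> powr p * (h1 * h2)))"
  define d1 where "d1 = (\<lambda>x. ennreal ((D1plus h1 u x)\<^sup>2 * (h1 * h2)))"
  define d2 where "d2 = (\<lambda>x. ennreal ((D2plus h2 u x)\<^sup>2 * (h1 * h2)))"
  have Lp: "Lp_pow h1 h2 p C u = infsum g (?G (0, 0) C)" if "grid_box h1 h2 C" for C
    using clos_h_eq_grid_shifted_in[OF assms(1,2) that] by (simp add: Lp_pow_def g_def)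
  have D: "D_sq h1 h2 C u = infsum d1 (?G (h1 / 2, 0) C) + infsum d2 (?G (0, h2 / 2) C)"
    if "grid_box h1 h2 C" for C
    using clos_h_diff_bdry1_plus[OF assms(1,2) that] clos_h_diff_bdry2_plus[OF assms(1,2) that]
    by (simp add: D_sq_def d1_def d2_def)
  have Lp_sum: "(\<Sum>\<^sub>\<infinity>i\<in>I. Lp_pow h1 h2 p (B i) u) = (\<Sum>\<^sub>\<infinity>i\<in>I. infsum g (?G (0, 0) (B i)))"
    using Lp assms(5) by (intro infsum_cong) simp
  have "(\<Sum>\<^sub>\<infinity>i\<in>I. D_sq h1 h2 (B i) u)
      = (\<Sum>\<^sub>\<infinity>i\<in>I. infsum d1 (?G (h1 / 2, 0) (B i)) + infsum d2 (?G (0, h2 / 2) (B i)))"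
    using D assms(5) by (intro infsum_cong) simp
  also have "\<dots> = (\<Sum>\<^sub>\<infinity>i\<in>I. infsum d1 (?G (h1 / 2, 0) (B i)))
      + (\<Sum>\<^sub>\<infinity>i\<in>I. infsum d2 (?G (0, h2 / 2) (B i)))"
    by (rule infsum_add) (simp_all add: nonneg_summable_on_complete)
  finally have D_sum: "(\<Sum>\<^sub>\<infinity>i\<in>I. D_sq h1 h2 (B i) u)
      = (\<Sum>\<^sub>\<infinity>i\<in>I. infsum d1 (?G (h1 / 2, 0) (B i)))
      + (\<Sum>\<^sub>\<infinity>i\<in>I. infsum d2 (?G (0, h2 / 2) (B i)))" .
  show ?thesis
    unfolding Lp[OF assms(3)] D[OF assms(3)] Lp_sum D_sum distrib_left
    by (intro conjI add_mono infsum_grid_shifted_in_le_sum sum_infsum_grid_shifted_in_le_4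
        sum_infsum_grid_shifted_in_half_step1_le_2 sum_infsum_grid_shifted_in_half_step2_le_2)
qed

end
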